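(* Let $M$ be a $4$-dimensional manifold, $F\subset T^r_sM$ a vector subbundle of a tensor bundle with adapted fiber-linear coordinates $(x^m,v_A)$, and $J^2F$ its second-order jet bundle with coordinates $(x^m,v_A,v_{Ap},v_{AI})$. Consider the system of $140$ first-order linear partial differential equations for a function $L$ on $J^2F$ \begin{align*} 0 &= L_{:m},\\ 0 &= L^{:A} C_{An}^{Bm} v_B + L^{:Ap} \bigl[ C_{An}^{Bm} \delta_p^q - \delta_A^B \delta^q_n \delta^m_p \bigr] v_{Bq} + L^{:AI} \bigl[ C_{An}^{Bm} \delta_I^J - 2 \delta_A^B J_I^{pm} I^J_{pn} \bigr] v_{BJ} + L\, \delta^m_n,\\ 0 &= L^{:A(p\vert}C_{An}^{B \vert m)} v_B + L^{: AI} \bigl[ C_{An}^{B(m\vert}\, 2 J_I^{\vert p) q} - \delta^B_A J_I^{pm} \delta_n^q \bigr] v_{Bq},\\ 0 &= L^{:AI} C_{An}^{B(m\vert} v_B J_I^{\vert p q )}, \end{align*} and the corresponding homogeneous system obtained by deleting the term $L\,\delta^m_n$ from the second equation. Let $k:=\dim(J^2F)-140$, let $\Psi_1,\dots,\Psi_k$ be $k$ functionally independent solutions of the homogeneous system, and let $\omega$ be any particular solution of the (inhomogeneous) system. Then the general solution of the system is of the form $$\omega\cdot\mathcal{F}(\Psi_1,\dots,\Psi_k),$$ where $\mathcal{F}$ is an arbitrary function.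
   Context: Spacetime indices $m,n,p,q,\dots$ run over $0,\dots,3$; $A,B,\dots$ run over the fiber dimension of $F$; repeated indices are summed; round brackets denote symmetrization over the enclosed indices (indices between vertical bars excluded). The index $I,J$ runs over $0,\dots,9$ and labels symmetric index pairs via constant intertwiners $I^I_{pq}$, $J_I^{pq}$ (each symmetric in $pq$) with $I^I_{pq}J_J^{pq}=\delta^I_J$, $v_{AI}=J_I^{ij}v_{Aij}$, $v_{Aij}=I^I_{ij}v_{AI}$, where $v_{Ap}$, $v_{Aij}$ are jet coordinates of first and symmetric second derivatives. $L_{:m}=\partial L/\partial x^m$, $L^{:A}=\partial L/\partial v_A$, $L^{:Ap}=\partial L/\partial v_{Ap}$, $L^{:AI}=\partial L/\partial v_{AI}$. The constants $C^{Bm}_{An}$ are defined by the lift of vector fields $\xi$ on $M$ to $F$ induced by the natural (pushforward/pullback) action of diffeomorphisms on tensors: $\xi_F=\xi^m\frac{\partial}{\partial x^m}+C_{An}^{Bm}v_B\,\partial_m\xi^n\frac{\partial}{\partial v_A}$. *)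

theory Defs
  imports "HOL-Analysis.Analysis" "HOL-Library.Numeral_Type"
begin

text \<open>Coordinates on J^2F: (x^m, v_A, v_{Ap}, v_{AI}); spacetime indices have type 4,
  symmetric index pairs I have type 10, fiber indices A have the finite type 'a.\<close>
type_synonym 'a jet2 = "(real^4) \<times> (real^'a) \<times> (real^4^'a) \<times> (real^10^'a)"

datatype eqidx = Eq1 4 | Eq2 4 4 | Eq3 4 4 4 | Eq4 4 4 4 4

text \<open>Convention: C A n B m stands for C_{An}^{Bm}; Ii K p q for I^K_{pq}; Ji K p q for J_K^{pq}.\<close>

text \<open>Components of tensors in T^r_s: functions of (upper index list, lower index list).
  tens_rep n m is the generator of the natural infinitesimal action of a vector field xi
  with only d_m xi^n = 1 (coefficient of d_m xi^n in the lift).\<close>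
definition tens_rep :: "4 \<Rightarrow> 4 \<Rightarrow> (4 list \<times> 4 list \<Rightarrow> real) \<Rightarrow> (4 list \<times> 4 list \<Rightarrow> real)" where
  "tens_rep n m T = (\<lambda>(u, l).
      (\<Sum>i<length u. if u ! i = n then T (u[i := m], l) else 0)
    - (\<Sum>j<length l. if l ! j = m then T (u, l[j := n]) else 0))"

text \<open>F is a subbundle of T^r_s whose fibre-linear coordinates v_A are the coefficients
  with respect to the (constant) basis E_A of the fibre, and C is the coefficient tensor of
  the natural lift: the lift of xi to F is xi^m d_m + C_{An}^{Bm} v_B d_m xi^n d/dv_A.\<close>
definition natural_lift_coeffs ::
  "nat \<Rightarrow> nat \<Rightarrow> ('a::finite \<Rightarrow> (4 list \<times> 4 list \<Rightarrow> real)) \<Rightarrow> ('a \<Rightarrow> 4 \<Rightarrow> 'a \<Rightarrow> 4 \<Rightarrow> real) \<Rightarrow> bool" where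
  "natural_lift_coeffs r s E C \<longleftrightarrow>
     (\<forall>A u l. E A (u, l) \<noteq> 0 \<longrightarrow> length u = r \<and> length l = s) \<and>
     (\<forall>c. (\<forall>u l. (\<Sum>A\<in>UNIV. c A * E A (u, l)) = 0) \<longrightarrow> (\<forall>A. c A = 0)) \<and>
     (\<forall>B n m u l. length u = r \<longrightarrow> length l = s \<longrightarrow>
        tens_rep n m (E B) (u, l) = (\<Sum>A\<in>UNIV. C A n B m * E A (u, l)))"

definition intertwiners :: "(10 \<Rightarrow> 4 \<Rightarrow> 4 \<Rightarrow> real) \<Rightarrow> (10 \<Rightarrow> 4 \<Rightarrow> 4 \<Rightarrow> real) \<Rightarrow> bool" where
  "intertwiners Ii Ji \<longleftrightarrow>
     (\<forall>K p q. Ii K p q = Ii K q p) \<and> (\<forall>K p q. Ji K p q = Ji K q p) \<and>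
     (\<forall>K K'. (\<Sum>p\<in>UNIV. \<Sum>q\<in>UNIV. Ii K p q * Ji K' p q) = (if K = K' then 1 else 0)) \<and>
     (\<forall>p q r s. (\<Sum>K\<in>UNIV. Ii K p q * Ji K r s) =
         ((if p = r \<and> q = s then 1 else 0) + (if p = s \<and> q = r then 1 else 0)) / 2)"

text \<open>The vector field on J^2F whose derivative of L is the left-hand side of each equation
  (without the term L delta^m_n).\<close>
fun eqfield :: "('a::finite \<Rightarrow> 4 \<Rightarrow> 'a \<Rightarrow> 4 \<Rightarrow> real) \<Rightarrow> (10 \<Rightarrow> 4 \<Rightarrow> 4 \<Rightarrow> real) \<Rightarrow>
    (10 \<Rightarrow> 4 \<Rightarrow> 4 \<Rightarrow> real) \<Rightarrow> eqidx \<Rightarrow> 'a jet2 \<Rightarrow> 'a jet2" where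
  "eqfield C Ii Ji (Eq1 m) z = (axis m 1, 0, 0, 0)"
| "eqfield C Ii Ji (Eq2 n m) (x, v, vp, vI) =
     (0,
      \<chi> A. (\<Sum>B\<in>UNIV. C A n B m * v $ B),
      \<chi> A p. (\<Sum>B\<in>UNIV. \<Sum>q\<in>UNIV.
                 (C A n B m * (if p = q then 1 else 0)
                  - (if A = B \<and> q = n \<and> m = p then 1 else 0)) * vp $ B $ q),
      \<chi> A K. (\<Sum>B\<in>UNIV. \<Sum>K'\<in>UNIV.
                 (C A n B m * (if K = K' then 1 else 0)
                  - 2 * (if A = B then 1 else 0) * (\<Sum>p\<in>UNIV. Ji K p m * Ii K' p n)) * vI $ B $ K'))"
| "eqfield C Ii Ji (Eq3 n m p) (x, v, vp, vI) =
     (0, 0,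
      \<chi> A r. (\<Sum>B\<in>UNIV. ((if r = p then C A n B m else 0) + (if r = m then C A n B p else 0)) / 2 * v $ B),
      \<chi> A K. (\<Sum>B\<in>UNIV. \<Sum>q\<in>UNIV.
                 ((C A n B m * 2 * Ji K p q + C A n B p * 2 * Ji K m q) / 2
                  - (if A = B then 1 else 0) * Ji K p m * (if n = q then 1 else 0)) * vp $ B $ q))"
| "eqfield C Ii Ji (Eq4 n m p q) (x, v, vp, vI) =
     (0, 0, 0,
      \<chi> A K. (\<Sum>B\<in>UNIV. v $ B *
                 (C A n B m * Ji K p q + C A n B m * Ji K q p + C A n B p * Ji K m q
                + C A n B p * Ji K q m + C A n B q * Ji K m p + C A n B q * Ji K p m) / 6))"

fun inhom :: "eqidx \<Rightarrow> real" where
  "inhom (Eq2 n m) = (if m = n then 1 else 0)"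
| "inhom _ = 0"

definition solves_on ::
  "('a::finite \<Rightarrow> 4 \<Rightarrow> 'a \<Rightarrow> 4 \<Rightarrow> real) \<Rightarrow> (10 \<Rightarrow> 4 \<Rightarrow> 4 \<Rightarrow> real) \<Rightarrow>
   (10 \<Rightarrow> 4 \<Rightarrow> 4 \<Rightarrow> real) \<Rightarrow> (eqidx \<Rightarrow> real) \<Rightarrow> 'a jet2 set \<Rightarrow> ('a jet2 \<Rightarrow> real) \<Rightarrow> bool" where
  "solves_on C Ii Ji c V L \<longleftrightarrow>
     (\<forall>z\<in>V. L differentiable (at z) \<and>
        (\<forall>\<alpha>. frechet_derivative L (at z) (eqfield C Ii Ji \<alpha> z) + c \<alpha> * L z = 0))"

definition C1_on :: "'b::euclidean_space set \<Rightarrow> ('b \<Rightarrow> 'c::real_normed_vector) \<Rightarrow> bool" where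
  "C1_on U f \<longleftrightarrow> (\<forall>z\<in>U. f differentiable (at z)) \<and>
     (\<forall>h. continuous_on U (\<lambda>z. frechet_derivative f (at z) h))"

end

theory Submission
  imports Defs
begin

text \<open>Where \<omega> does not vanish, a solution L is \<omega> times H = L / \<omega>, and H solves the
  homogeneous system, i.e. its derivative kills all 140 vector fields of the system. These fields
  are tangent to the level sets of \<Psi>, and by the rank condition they span the whole kernel of
  d\<Psi>, which has dimension dim J^2F - k. Straightening \<Psi> into a linear projection with the
  inverse function theorem, H becomes a function whose derivative kills the fibres of a linear
  map; on a convex neighbourhood it is therefore constant on these fibres and factors through
  \<Psi>. Conversely \<omega> \<F>(\<Psi>) is a solution by the Leibniz rule, since d\<Psi> kills the fields.\<close>

lemma dim_kernel_surj:
  fixes D :: "'b::euclidean_space \<Rightarrow> 'c::euclidean_space"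
  assumes linD: "linear D" and "surj D"
  shows "dim {h. D h = 0} = DIM('b) - DIM('c)"
proof -
  obtain g where ling: "linear g" and Dg: "\<And>y. D (g y) = y"
    using real_vector.linear_surjective_right_inverse[OF assms] by (metis comp_apply id_apply)
  define S where "S = {h. D h = 0}"
  define T where "T = range g"
  have "subspace S"
    unfolding S_def by (rule real_vector.linear_subspace_kernel[OF linD])
  moreover have "subspace T"
    unfolding T_def by (rule real_vector.linear_subspace_image[OF ling subspace_UNIV])
  moreover have "{x + y |x y. x \<in> S \<and> y \<in> T} = UNIV"
  proof -
    have "h = (h - g (D h)) + g (D h)" "h - g (D h) \<in> S" "g (D h) \<in> T" for h
      unfolding S_def T_def using linD Dg by (auto simp: linear_diff)
    then show ?thesis by blast
  qed
  moreover have "S \<inter> T = {0}"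
    unfolding S_def T_def using Dg linear_0[OF ling] linear_0[OF linD] by auto
  moreover have "dim T = DIM('c)"
  proof -
    have "inj_on g (span UNIV)"
      by (metis Dg inj_onI)
    then show ?thesis
      unfolding T_def using dim_image_eq[OF ling] by simp
  qed
  ultimately show ?thesis
    using dim_sums_Int[of S T] unfolding S_def by simp
qed

lemma kernel_eq_span_if_codim:
  fixes D :: "'b::euclidean_space \<Rightarrow> 'c::euclidean_space"
  assumes linD: "linear D" and "surj D" and S: "\<And>x. x \<in> S \<Longrightarrow> D x = 0"
    and codim: "DIM('c) = DIM('b) - dim S"
  shows "{h. D h = 0} = span S"
proof -
  have kernel: "subspace {h. D h = 0}"
    by (rule real_vector.linear_subspace_kernel[OF linD])
  have "span S \<subseteq> {h. D h = 0}"
    using S by (intro span_minimal kernel) auto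
  moreover have "dim {h. D h = 0} = dim S"
    using dim_kernel_surj[OF assms(1,2)] codim dim_subset_UNIV[of S] by simp
  ultimately show ?thesis
    using subspace_dim_equal[OF subspace_span kernel] by (metis dim_span order_refl)
qed

lemma constant_on_linear_fibres:
  fixes f :: "'b::real_normed_vector \<Rightarrow> 'd::real_normed_vector"
  assumes "convex B" and linD: "linear D"
    and df: "\<And>y. y \<in> B \<Longrightarrow> (f has_derivative f' y) (at y)"
    and ker: "\<And>y h. y \<in> B \<Longrightarrow> D h = 0 \<Longrightarrow> f' y h = 0"
    and "y1 \<in> B" "y2 \<in> B" "D y1 = D y2"
  shows "f y1 = f y2"
proof -
  define p where "p t = (1 - t) *\<^sub>R y1 + t *\<^sub>R y2" for t :: real
  have pB: "p t \<in> B" if "t \<in> {0..1}" for t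
    unfolding p_def using convexD_alt[OF assms(1,5,6)] that by simp
  have "((f \<circ> p) has_derivative (\<lambda>_. 0)) (at t within {0..1})" if t: "t \<in> {0..1}" for t
  proof -
    have dp: "(p has_derivative (\<lambda>s. s *\<^sub>R (y2 - y1))) (at t)"
      unfolding p_def by (auto intro!: derivative_eq_intros simp: algebra_simps)
    have "((f \<circ> p) has_derivative (\<lambda>s. f' (p t) (s *\<^sub>R (y2 - y1)))) (at t)"
      using diff_chain_at[OF dp df[OF pB[OF t]]] by (simp add: o_def)
    moreover have "D (s *\<^sub>R (y2 - y1)) = 0" for s
      using linD \<open>D y1 = D y2\<close> by (simp add: linear_scale linear_diff)
    ultimately show ?thesis
      using ker[OF pB[OF t]] by (auto intro: has_derivative_at_withinI)
  qed
  then have "(f \<circ> p) 0 = (f \<circ> p) 1"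
    by (rule has_derivative_zero_unique[OF convex_real_interval(5)]) auto
  then show ?thesis
    unfolding p_def by simp
qed

text \<open>\<Phi> corrects the identity by a right inverse of d\<Psi>(z0), so that d\<Psi>(z0) \<circ> \<Phi> = \<Psi>
  while d\<Phi>(z0) is the identity.\<close>
lemma submersion_straightening:
  fixes \<Psi> :: "'b::euclidean_space \<Rightarrow> 'c::euclidean_space"
  assumes U: "open U" and z0: "z0 \<in> U"
    and dPsi: "\<And>z. z \<in> U \<Longrightarrow> (\<Psi> has_derivative \<Psi>' z) (at z)"
    and cPsi: "\<And>h. continuous_on U (\<lambda>z. \<Psi>' z h)"
    and surj: "surj (\<Psi>' z0)"
  obtains U' V \<Phi> G G' where "open U'" "z0 \<in> U'" "U' \<subseteq> U" "open V"
    "homeomorphism U' V \<Phi> G" "\<And>z. \<Psi>' z0 (\<Phi> z) = \<Psi> z"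
    "\<And>y. y \<in> V \<Longrightarrow> (G has_derivative G' y) (at y)"
proof -
  define D where "D = \<Psi>' z0"
  have blD: "bounded_linear D"
    unfolding D_def using dPsi[OF z0] by (rule has_derivative_bounded_linear)
  obtain g where ling: "linear g" and Dg: "\<And>y. D (g y) = y"
    using real_vector.linear_surjective_right_inverse[of D] blD surj
    unfolding D_def by (metis bounded_linear.linear comp_apply id_apply)
  have blg: "bounded_linear g"
    using ling by (simp add: linear_conv_bounded_linear)
  define \<Phi> where "\<Phi> z = z + g (\<Psi> z - D z)" for z
  define \<Phi>' where "\<Phi>' z = Blinfun (\<lambda>h. h + g (\<Psi>' z h - D h))" for z
  have \<Phi>'_apply: "blinfun_apply (\<Phi>' z) h = h + g (\<Psi>' z h - D h)" if "z \<in> U" for z h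
  proof -
    have "bounded_linear (\<lambda>h. h + g (\<Psi>' z h - D h))"
      using has_derivative_bounded_linear[OF dPsi[OF that]] blD
      by (intro bounded_linear_add bounded_linear_ident bounded_linear_compose[OF blg] bounded_linear_sub)
    then show ?thesis
      unfolding \<Phi>'_def by (simp add: bounded_linear_Blinfun_apply)
  qed
  have d\<Phi>: "(\<Phi> has_derivative blinfun_apply (\<Phi>' z)) (at z)" if "z \<in> U" for z
    unfolding \<Phi>_def \<Phi>'_apply[OF that, abs_def]
    by (intro derivative_intros dPsi[OF that] bounded_linear.has_derivative[OF blg]
        bounded_linear.has_derivative[OF blD])
  have c\<Phi>': "continuous_on U \<Phi>'"
  proof (rule continuous_on_blinfun_componentwise)
    fix i :: 'b
    have "continuous_on U (\<lambda>z. i + g (\<Psi>' z i - D i))"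
      by (intro continuous_intros cPsi continuous_on_compose2[OF linear_continuous_on[OF blg], of _ _ UNIV])
        auto
    then show "continuous_on U (\<lambda>z. blinfun_apply (\<Phi>' z) i)"
      by (rule continuous_on_eq) (simp add: \<Phi>'_apply)
  qed
  have d\<Phi>_z0: "id_blinfun o\<^sub>L \<Phi>' z0 = id_blinfun"
    by (rule blinfun_eqI) (simp add: \<Phi>'_apply[OF z0] D_def linear_0[OF ling])
  obtain U' V G G' where "open U'" "U' \<subseteq> U" "z0 \<in> U'" "open V"
    "homeomorphism U' V \<Phi> G" "\<And>y. y \<in> V \<Longrightarrow> (G has_derivative G' y) (at y)"
    by (rule inverse_function_theorem[OF U d\<Phi> c\<Phi>' z0 d\<Phi>_z0]) (assumption, (rule that; assumption))
  moreover have "D (\<Phi> z) = \<Psi> z" for z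
    unfolding \<Phi>_def using blD Dg by (simp add: linear_add bounded_linear.linear)
  ultimately show ?thesis
    using that unfolding D_def by blast
qed

lemma derivative_comp_eq_linear:
  fixes G :: "'a::euclidean_space \<Rightarrow> 'b::real_normed_vector"
    and f :: "'b \<Rightarrow> 'c::real_normed_vector"
  assumes "open W" "y \<in> W" and linD: "linear D" and fG: "\<And>y'. y' \<in> W \<Longrightarrow> f (G y') = D y'"
    and dG: "(G has_derivative G') (at y)" and df: "(f has_derivative f') (at (G y))"
  shows "f' (G' h) = D h"
proof -
  have "((f \<circ> G) has_derivative (f' \<circ> G')) (at y)"
    by (rule diff_chain_at[OF dG df])
  moreover have "((f \<circ> G) has_derivative D) (at y)"
    by (rule has_derivative_transform_within_open[OF linear_imp_has_derivative[OF linD] assms(1,2)])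
      (simp add: fG)
  ultimately have "f' \<circ> G' = D"
    by (rule has_derivative_unique)
  then show ?thesis
    by (simp add: fun_eq_iff)
qed

lemma constant_on_fibres_factors:
  assumes "\<And>y1 y2. y1 \<in> B \<Longrightarrow> y2 \<in> B \<Longrightarrow> D y1 = D y2 \<Longrightarrow> f y1 = f y2"
  obtains F where "\<And>y. y \<in> B \<Longrightarrow> f y = F (D y)"
proof
  fix y assume y: "y \<in> B"
  then have "\<exists>y'. y' \<in> B \<and> D y' = D y"
    by blast
  then have "(SOME y'. y' \<in> B \<and> D y' = D y) \<in> B \<and> D (SOME y'. y' \<in> B \<and> D y' = D y) = D y"
    by (rule someI_ex)
  then show "f y = f (SOME y'. y' \<in> B \<and> D y' = D y)"
    using assms[OF y] by simp
qed

lemma submersion_factor_local: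
  fixes \<Psi> :: "'b::euclidean_space \<Rightarrow> 'c::euclidean_space"
    and H :: "'b \<Rightarrow> 'd::real_normed_vector"
  assumes U: "open U" and z0: "z0 \<in> U"
    and dPsi: "\<And>z. z \<in> U \<Longrightarrow> (\<Psi> has_derivative \<Psi>' z) (at z)"
    and cPsi: "\<And>h. continuous_on U (\<lambda>z. \<Psi>' z h)"
    and surj: "surj (\<Psi>' z0)"
    and dH: "\<And>z. z \<in> U \<Longrightarrow> (H has_derivative H' z) (at z)"
    and ker: "\<And>z h. z \<in> U \<Longrightarrow> \<Psi>' z h = 0 \<Longrightarrow> H' z h = 0"
  obtains V F where "open V" "z0 \<in> V" "V \<subseteq> U" "\<And>z. z \<in> V \<Longrightarrow> H z = F (\<Psi> z)"
proof -
  define D where "D = \<Psi>' z0"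
  have linD: "linear D"
    unfolding D_def using dPsi[OF z0] by (rule has_derivative_linear)
  obtain U' W \<Phi> G G' where U': "open U'" "z0 \<in> U'" "U' \<subseteq> U" and W: "open W"
    and hom: "homeomorphism U' W \<Phi> G" and D\<Phi>: "\<And>z. D (\<Phi> z) = \<Psi> z"
    and dG: "\<And>y. y \<in> W \<Longrightarrow> (G has_derivative G' y) (at y)"
    using submersion_straightening[OF U z0 dPsi cPsi surj] unfolding D_def by metis
  have GW: "y \<in> W \<Longrightarrow> G y \<in> U" for y
    using hom U' unfolding homeomorphism_def by blast
  have \<Psi>G: "\<Psi> (G y) = D y" if "y \<in> W" for y
    using D\<Phi>[of "G y"] homeomorphism_apply2[OF hom that] by simp
  have "\<Phi> z0 \<in> W"
    using hom U'(2) unfolding homeomorphism_def by blast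
  then obtain e where e: "e > 0" "ball (\<Phi> z0) e \<subseteq> W"
    using W open_contains_ball by blast
  define B where "B = ball (\<Phi> z0) e"
  have "(H \<circ> G) y1 = (H \<circ> G) y2" if "y1 \<in> B" "y2 \<in> B" "D y1 = D y2" for y1 y2
  proof (rule constant_on_linear_fibres[OF _ linD _ _ that])
    fix y assume "y \<in> B"
    then have y: "y \<in> W"
      using e unfolding B_def by auto
    show "((H \<circ> G) has_derivative H' (G y) \<circ> G' y) (at y)"
      by (rule diff_chain_at[OF dG[OF y] dH[OF GW[OF y]]])
    show "(H' (G y) \<circ> G' y) h = 0" if "D h = 0" for h
      using ker[OF GW[OF y]] derivative_comp_eq_linear[OF W y linD \<Psi>G dG[OF y] dPsi[OF GW[OF y]]] that
      by simp
  qed (simp add: B_def)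
  then obtain F where F: "\<And>y. y \<in> B \<Longrightarrow> (H \<circ> G) y = F (D y)"
    using constant_on_fibres_factors by blast
  show thesis
  proof
    show "open (U' \<inter> \<Phi> -` B)"
      unfolding B_def
      using hom U' by (intro continuous_open_preimage open_ball) (auto simp: homeomorphism_def)
    show "z0 \<in> U' \<inter> \<Phi> -` B" "U' \<inter> \<Phi> -` B \<subseteq> U"
      unfolding B_def using U' e by auto
    show "H z = F (\<Psi> z)" if "z \<in> U' \<inter> \<Phi> -` B" for z
      using F[of "\<Phi> z"] homeomorphism_apply1[OF hom, of z] that by (simp add: D\<Phi>)
  qed
qed

definition solves_fields_on ::
  "('i \<Rightarrow> 'b \<Rightarrow> 'b) \<Rightarrow> ('i \<Rightarrow> real) \<Rightarrow> 'b set \<Rightarrow> ('b::real_normed_vector \<Rightarrow> real) \<Rightarrow> bool" where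
  "solves_fields_on X c V L \<longleftrightarrow>
     (\<forall>z\<in>V. L differentiable (at z) \<and>
        (\<forall>\<alpha>. frechet_derivative L (at z) (X \<alpha> z) + c \<alpha> * L z = 0))"

lemma solves_on_eq_solves_fields_on:
  "solves_on C Ii Ji c V L = solves_fields_on (eqfield C Ii Ji) c V L"
  unfolding solves_on_def solves_fields_on_def ..

lemma solves_fields_on_subset:
  "solves_fields_on X c U L \<Longrightarrow> V \<subseteq> U \<Longrightarrow> solves_fields_on X c V L"
  unfolding solves_fields_on_def by blast

lemma solves_fields_onD:
  assumes "solves_fields_on X c V L" "z \<in> V"
  shows "(L has_derivative frechet_derivative L (at z)) (at z)"
    and "frechet_derivative L (at z) (X \<alpha> z) = - c \<alpha> * L z"
  using assms unfolding solves_fields_on_def frechet_derivative_works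
  by (auto simp: eq_neg_iff_add_eq_0)

lemma solves_fields_on_quotient:
  assumes L: "solves_fields_on X c U L" and \<omega>: "solves_fields_on X c U \<omega>"
    and nz: "\<And>z. z \<in> U \<Longrightarrow> \<omega> z \<noteq> 0"
  shows "solves_fields_on X (\<lambda>_. 0) U (\<lambda>z. L z / \<omega> z)"
  unfolding solves_fields_on_def
proof (intro ballI conjI allI)
  fix z \<alpha> assume z: "z \<in> U"
  let ?L' = "frechet_derivative L (at z)" and ?\<omega>' = "frechet_derivative \<omega> (at z)"
  have d: "((\<lambda>z. L z / \<omega> z) has_derivative
      (\<lambda>h. (?L' h * \<omega> z - L z * ?\<omega>' h) / (\<omega> z * \<omega> z))) (at z)"
    by (rule has_derivative_divide'[OF solves_fields_onD(1)[OF L z] solves_fields_onD(1)[OF \<omega> z] nz[OF z]])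
  then show "(\<lambda>z. L z / \<omega> z) differentiable at z"
    by (rule differentiableI)
  show "frechet_derivative (\<lambda>z. L z / \<omega> z) (at z) (X \<alpha> z) + 0 * (L z / \<omega> z) = 0"
    unfolding frechet_derivative_at[OF d, symmetric]
    by (simp add: solves_fields_onD(2)[OF L z] solves_fields_onD(2)[OF \<omega> z])
qed

lemma solves_fields_on_times_invariant:
  fixes \<Psi> :: "'b::real_normed_vector \<Rightarrow> 'c::real_normed_vector"
  assumes \<omega>: "solves_fields_on X c V \<omega>"
    and dPsi: "\<And>z. z \<in> V \<Longrightarrow> (\<Psi> has_derivative \<Psi>' z) (at z)"
    and inv: "\<And>z \<alpha>. z \<in> V \<Longrightarrow> \<Psi>' z (X \<alpha> z) = 0"
    and dF: "\<And>z. z \<in> V \<Longrightarrow> \<F> differentiable (at (\<Psi> z))"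
  shows "solves_fields_on X c V (\<lambda>z. \<omega> z * \<F> (\<Psi> z))"
  unfolding solves_fields_on_def
proof (intro ballI conjI allI)
  fix z \<alpha> assume z: "z \<in> V"
  let ?\<omega>' = "frechet_derivative \<omega> (at z)" and ?F' = "frechet_derivative \<F> (at (\<Psi> z))"
  have "(\<F> has_derivative ?F') (at (\<Psi> z))"
    using dF[OF z] by (simp add: frechet_derivative_works)
  then have d: "((\<lambda>z. \<omega> z * \<F> (\<Psi> z)) has_derivative
      (\<lambda>h. \<omega> z * ?F' (\<Psi>' z h) + ?\<omega>' h * \<F> (\<Psi> z))) (at z)"
    using has_derivative_mult[OF solves_fields_onD(1)[OF \<omega> z] diff_chain_at[OF dPsi[OF z]]]
    by (simp add: o_def)
  then show "(\<lambda>z. \<omega> z * \<F> (\<Psi> z)) differentiable at z"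
    by (rule differentiableI)
  have "?F' 0 = 0"
    using dF[OF z] by (simp add: frechet_derivative_works has_derivative_linear linear_0)
  then show "frechet_derivative (\<lambda>z. \<omega> z * \<F> (\<Psi> z)) (at z) (X \<alpha> z) + c \<alpha> * (\<omega> z * \<F> (\<Psi> z)) = 0"
    unfolding frechet_derivative_at[OF d, symmetric]
    by (simp add: inv[OF z] solves_fields_onD(2)[OF \<omega> z])
qed

lemma solves_fields_on_components_invariant:
  fixes \<Psi> :: "'b::real_normed_vector \<Rightarrow> real^'k"
  assumes "\<forall>i. solves_fields_on X (\<lambda>_. 0) U (\<lambda>z. \<Psi> z $ i)" "z \<in> U"
    and "(\<Psi> has_derivative \<Psi>') (at z)"
  shows "\<Psi>' (X \<alpha> z) = 0"
proof -
  have "\<Psi>' (X \<alpha> z) $ i = 0" for i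
  proof -
    have "((\<lambda>z. \<Psi> z $ i) has_derivative (\<lambda>h. \<Psi>' h $ i)) (at z)"
      by (rule bounded_linear.has_derivative[OF bounded_linear_vec_nth assms(3)])
    then show ?thesis
      using solves_fields_onD(2)[of X "\<lambda>_. 0" U "\<lambda>z. \<Psi> z $ i" z \<alpha>] assms(1,2)
      by (simp add: frechet_derivative_at[symmetric])
  qed
  then show ?thesis
    by (simp add: vec_eq_iff)
qed

lemma solves_fields_on_homogeneous_factor_local:
  fixes \<Psi> :: "'b::euclidean_space \<Rightarrow> 'c::euclidean_space"
  assumes "open U" "z0 \<in> U"
    and dPsi: "\<And>z. z \<in> U \<Longrightarrow> (\<Psi> has_derivative \<Psi>' z) (at z)"
    and "\<And>h. continuous_on U (\<lambda>z. \<Psi>' z h)" "surj (\<Psi>' z0)"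
    and kernel: "\<And>z. z \<in> U \<Longrightarrow> {h. \<Psi>' z h = 0} \<subseteq> span (range (\<lambda>\<alpha>. X \<alpha> z))"
    and H: "solves_fields_on X (\<lambda>_. 0) U H"
  obtains V F where "open V" "z0 \<in> V" "V \<subseteq> U" "\<And>z. z \<in> V \<Longrightarrow> H z = F (\<Psi> z)"
proof -
  have "frechet_derivative H (at z) h = 0" if z: "z \<in> U" and "\<Psi>' z h = 0" for z h
  proof -
    have span: "h \<in> span (range (\<lambda>\<alpha>. X \<alpha> z))"
      using kernel that by blast
    have lin: "linear (frechet_derivative H (at z))"
      using solves_fields_onD(1)[OF H z] by (rule has_derivative_linear)
    show ?thesis
      by (rule real_vector.linear_eq_0_on_span[OF lin _ span]) (auto simp: solves_fields_onD(2)[OF H z])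
  qed
  then show thesis
    using submersion_factor_local[OF assms(1-5) solves_fields_onD(1)[OF H]] that by blast
qed

lemma solves_fields_on_factor_local:
  fixes \<Psi> :: "'b::euclidean_space \<Rightarrow> 'c::euclidean_space"
  assumes "open U"
    and dPsi: "\<And>z. z \<in> U \<Longrightarrow> (\<Psi> has_derivative \<Psi>' z) (at z)"
    and cPsi: "\<And>h. continuous_on U (\<lambda>z. \<Psi>' z h)"
    and surj: "\<And>z. z \<in> U \<Longrightarrow> surj (\<Psi>' z)"
    and kernel: "\<And>z. z \<in> U \<Longrightarrow> {h. \<Psi>' z h = 0} \<subseteq> span (range (\<lambda>\<alpha>. X \<alpha> z))"
    and \<omega>: "solves_fields_on X c U \<omega>" and nz: "\<And>z. z \<in> U \<Longrightarrow> \<omega> z \<noteq> 0"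
    and L: "solves_fields_on X c U L" and z0: "z0 \<in> U"
  obtains V F where "open V" "z0 \<in> V" "V \<subseteq> U" "\<And>z. z \<in> V \<Longrightarrow> L z = \<omega> z * F (\<Psi> z)"
proof -
  obtain V F where V: "open V" "z0 \<in> V" "V \<subseteq> U"
    and quotient: "\<And>z. z \<in> V \<Longrightarrow> L z / \<omega> z = F (\<Psi> z)"
    using solves_fields_on_homogeneous_factor_local[OF assms(1) z0 dPsi cPsi surj[OF z0] kernel
        solves_fields_on_quotient[OF L \<omega> nz]] by blast
  have "L z = \<omega> z * F (\<Psi> z)" if "z \<in> V" for z
    using quotient[OF that] nz V(3) that by (auto simp: field_simps)
  with V that show thesis
    by blast
qed

theorem mainTheorem3:
  fixes r s :: nat
    and E :: "'a::finite \<Rightarrow> (4 list \<times> 4 list \<Rightarrow> real)"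
    and C :: "'a \<Rightarrow> 4 \<Rightarrow> 'a \<Rightarrow> 4 \<Rightarrow> real"
    and Ii Ji :: "10 \<Rightarrow> 4 \<Rightarrow> 4 \<Rightarrow> real"
    and U :: "'a jet2 set"
    and \<omega> :: "'a jet2 \<Rightarrow> real"
    and \<Psi> :: "'a jet2 \<Rightarrow> real^'k"
  assumes lift: "natural_lift_coeffs r s E C"
    and intw: "intertwiners Ii Ji"
    and U_open: "open U"
    and rank: "\<forall>z\<in>U. dim (range (\<lambda>\<alpha>. eqfield C Ii Ji \<alpha> z)) = 140"
    and k_def: "CARD('k) = DIM('a jet2) - 140"
    and Psi_C1: "C1_on U \<Psi>"
    and Psi_sol: "\<forall>i. solves_on C Ii Ji (\<lambda>_. 0) U (\<lambda>z. \<Psi> z $ i)"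
    and Psi_indep: "\<forall>z\<in>U. surj (frechet_derivative \<Psi> (at z))"
    and omega_sol: "solves_on C Ii Ji inhom U \<omega>"
    and omega_nz: "\<forall>z\<in>U. \<omega> z \<noteq> 0"
  shows "(\<forall>L. solves_on C Ii Ji inhom U L \<longrightarrow>
            (\<forall>z0\<in>U. \<exists>V \<F>. open V \<and> z0 \<in> V \<and> V \<subseteq> U \<and>
                        (\<forall>z\<in>V. L z = \<omega> z * \<F> (\<Psi> z))))
       \<and> (\<forall>V \<F>. open V \<longrightarrow> V \<subseteq> U \<longrightarrow> (\<forall>z\<in>V. \<F> differentiable (at (\<Psi> z))) \<longrightarrow>
            solves_on C Ii Ji inhom V (\<lambda>z. \<omega> z * \<F> (\<Psi> z)))"
proof -
  define X where "X = eqfield C Ii Ji"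
  define \<Psi>' where "\<Psi>' z = frechet_derivative \<Psi> (at z)" for z
  have dPsi: "(\<Psi> has_derivative \<Psi>' z) (at z)" if "z \<in> U" for z
    using Psi_C1 that unfolding C1_on_def \<Psi>'_def by (simp add: frechet_derivative_works)
  have cPsi: "continuous_on U (\<lambda>z. \<Psi>' z h)" for h
    using Psi_C1 unfolding C1_on_def \<Psi>'_def by blast
  have surj: "surj (\<Psi>' z)" if "z \<in> U" for z
    using Psi_indep that unfolding \<Psi>'_def by blast
  have invariant: "\<Psi>' z (X \<alpha> z) = 0" if "z \<in> U" for z \<alpha>
    unfolding X_def
    by (rule solves_fields_on_components_invariant[OF Psi_sol[unfolded solves_on_eq_solves_fields_on]
          that dPsi[OF that]])
  have kernel: "{h. \<Psi>' z h = 0} = span (range (\<lambda>\<alpha>. X \<alpha> z))" if z: "z \<in> U" for z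
  proof (rule kernel_eq_span_if_codim)
    show "linear (\<Psi>' z)"
      using dPsi[OF z] by (rule has_derivative_linear)
    show "DIM(real^'k) = DIM('a jet2) - dim (range (\<lambda>\<alpha>. X \<alpha> z))"
      using rank k_def z unfolding X_def by simp
  qed (use surj[OF z] invariant[OF z] in auto)
  have \<omega>: "solves_fields_on X inhom U \<omega>"
    using omega_sol unfolding solves_on_eq_solves_fields_on X_def .
  show ?thesis
    unfolding solves_on_eq_solves_fields_on X_def[symmetric]
  proof (intro conjI allI impI ballI)
    fix L z0 assume "solves_fields_on X inhom U L" "z0 \<in> U"
    then show "\<exists>V \<F>. open V \<and> z0 \<in> V \<and> V \<subseteq> U \<and> (\<forall>z\<in>V. L z = \<omega> z * \<F> (\<Psi> z))"
      using solves_fields_on_factor_local[OF U_open dPsi cPsi surj kernel[THEN equalityD1] \<omega>] omega_nz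
      by metis
  next
    fix V and \<F> :: "real^'k \<Rightarrow> real"
    assume "open V" "V \<subseteq> U" "\<forall>z\<in>V. \<F> differentiable (at (\<Psi> z))"
    then show "solves_fields_on X inhom V (\<lambda>z. \<omega> z * \<F> (\<Psi> z))"
      using solves_fields_on_times_invariant[OF solves_fields_on_subset[OF \<omega>] dPsi invariant]
      by blast
  qed
qed

end
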